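(* Let $K\ge d>0$, $C\ge 1$, $T\ge 1$. Let $\Gamma,\tilde\Gamma\in\mathbb{R}^{K\times d}$ with $\mathrm{rank}(\Gamma)=\mathrm{rank}(\tilde\Gamma)=d$, and define $w_t=\Gamma s_t$, $\tilde w_t=\tilde\Gamma\tilde s_t$ for $1\le t\le T$, where $s,\tilde s\in\mathbb{R}^{T\times d}$ are switching linear Gaussian source processes as in the context. Assume $w=(w_t)_t$ and $\tilde w=(\tilde w_t)_t$ have the same distribution, that $\Sigma_{1,1}=\mathrm{Cov}(s_1,s_1)$ has positive diagonal entries, and that there exist $t_0\in\{1,\dots,T\}$ and $\ell_0\in\{0,\dots,t_0-1\}$ such that the diagonal entries of $\Sigma_{1,1}^{-1/2}\,\Sigma_{t_0,t_0-\ell_0}\,\Sigma_{1,1}^{-1/2}$ are pairwise distinct, where $\Sigma_{t,r}=\mathrm{Cov}(s_t,s_r)$. Then there exist a $d\times d$ permutation matrix $P$ and an invertible diagonal matrix $D$ such that $\tilde\Gamma=\Gamma P D^{-1}$.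
   Context: Switching linear Gaussian source process: for each $i\in\{1,\dots,d\}$, $(u_t^{(i)})_{1\le t\le T}$ is a Markov chain on $\{1,\dots,C\}$ with initial law $\pi^{(i)}$ and transition matrix $A^{(i)}$; conditionally on $u_1^{(i)}=k$, $s_1^{(i)}\sim\mathcal{N}(m_k^{(i)},\Phi_k^{(i)})$; conditionally on $\{s_t^{(i)}, u_{t+1}^{(i)}=k\}$ (and the past), $s_{t+1}^{(i)}\sim\mathcal{N}(B_k^{(i)}s_t^{(i)}+b_k^{(i)},\Psi_k^{(i)})$, where $B_k^{(i)}\ne0$ and $\Phi_k^{(i)},\Psi_k^{(i)}>0$. The collections $\big((u_t^{(i)})_t,(s_t^{(i)})_t\big)$ are mutually independent across $i$. The process $(\tilde u,\tilde s)$ is built in the same way with its own parameters $\tilde\pi^{(i)},\tilde A^{(i)},\tilde m_k^{(i)},\tilde\Phi_k^{(i)},\tilde B_k^{(i)},\tilde b_k^{(i)},\tilde\Psi_k^{(i)}$ (same $C$). *)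

theory Defs
  imports "HOL-Probability.Probability"
begin

text \<open>Parameters of a switching linear Gaussian source process with d components
  (indexed by the finite type 'd) and C regimes (indexed by 1..C).
  All scalar: for component i and regime k,
  init_law i k = pi^(i)_k, trans i k l = A^(i)_{k l} (from k to l),
  m i k, Phi i k (variance), B i k, b i k, Psi i k (variance).\<close>

record 'd slgp =
  init_law :: "'d \<Rightarrow> nat \<Rightarrow> real"
  trans    :: "'d \<Rightarrow> nat \<Rightarrow> nat \<Rightarrow> real"
  mean0    :: "'d \<Rightarrow> nat \<Rightarrow> real"
  var0     :: "'d \<Rightarrow> nat \<Rightarrow> real"
  coefB    :: "'d \<Rightarrow> nat \<Rightarrow> real"
  coefb    :: "'d \<Rightarrow> nat \<Rightarrow> real"
  varPsi   :: "'d \<Rightarrow> nat \<Rightarrow> real"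

definition valid_slgp :: "nat \<Rightarrow> 'd slgp \<Rightarrow> bool" where
  "valid_slgp C p \<longleftrightarrow>
     (\<forall>i. (\<forall>k\<in>{1..C}. init_law p i k \<ge> 0) \<and> (\<Sum>k=1..C. init_law p i k) = 1 \<and>
          (\<forall>k\<in>{1..C}. (\<forall>l\<in>{1..C}. trans p i k l \<ge> 0) \<and> (\<Sum>l=1..C. trans p i k l) = 1) \<and>
          (\<forall>k\<in>{1..C}. coefB p i k \<noteq> 0 \<and> var0 p i k > 0 \<and> varPsi p i k > 0))"

definition comp_density :: "nat \<Rightarrow> nat \<Rightarrow> 'd slgp \<Rightarrow> 'd \<Rightarrow> (nat \<Rightarrow> real) \<Rightarrow> real" where
  "comp_density C T p i x =
     (\<Sum>u\<in>PiE {1..T} (\<lambda>_. {1..C}).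
        (init_law p i (u 1) * (\<Prod>t\<in>{2..T}. trans p i (u (t - 1)) (u t))) *
        (normal_density (mean0 p i (u 1)) (sqrt (var0 p i (u 1))) (x 1) *
         (\<Prod>t\<in>{2..T}. normal_density (coefB p i (u t) * x (t - 1) + coefb p i (u t))
                                       (sqrt (varPsi p i (u t))) (x t))))"

definition source_law :: "nat \<Rightarrow> nat \<Rightarrow> ('d::finite) slgp \<Rightarrow> (nat \<Rightarrow> real^'d) measure" where
  "source_law C T p =
     density (PiM {1..T} (\<lambda>_. lborel))
             (\<lambda>s. ennreal (\<Prod>i\<in>UNIV. comp_density C T p i (\<lambda>t. s t $ i)))"

definition obs_law :: "nat \<Rightarrow> nat \<Rightarrow> real^'d^'k \<Rightarrow> ('d::finite) slgp \<Rightarrow> (nat \<Rightarrow> real^'k) measure" where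
  "obs_law C T G p =
     distr (source_law C T p) (PiM {1..T} (\<lambda>_. borel)) (\<lambda>s. \<lambda>t\<in>{1..T}. G *v s t)"

definition cov_mat :: "(nat \<Rightarrow> real^'d) measure \<Rightarrow> nat \<Rightarrow> nat \<Rightarrow> real^'d^'d" where
  "cov_mat M t r =
     (\<chi> i j. (\<integral>s. (s t $ i) * (s r $ j) \<partial>M) - (\<integral>s. s t $ i \<partial>M) * (\<integral>s. s r $ j \<partial>M))"

definition psd_sqrt :: "real^'n^'n \<Rightarrow> real^'n^'n" where
  "psd_sqrt A = (THE R. transpose R = R \<and> (\<forall>x. 0 \<le> x \<bullet> (R *v x)) \<and> R ** R = A)"

definition inv_sqrt :: "real^'n^'n \<Rightarrow> real^'n^'n" where
  "inv_sqrt A = matrix_inv (psd_sqrt A)"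

definition permutation_matrix :: "real^'n^'n \<Rightarrow> bool" where
  "permutation_matrix P \<longleftrightarrow> (\<exists>\<sigma>. \<sigma> permutes (UNIV::'n set) \<and>
      P = (\<chi> i j. if i = \<sigma> j then 1 else 0))"

definition diagonal_mat :: "real^'n^'n \<Rightarrow> bool" where
  "diagonal_mat D \<longleftrightarrow> (\<forall>i j. i \<noteq> j \<longrightarrow> D $ i $ j = 0)"

end

theory Submission
  imports Defs
begin

text \<open>
  Equal observation laws have equal second moments, so
  \<open>G \<Sigma>\<^sub>t\<^sub>,\<^sub>r G\<^sup>T = G' \<Sigma>'\<^sub>t\<^sub>,\<^sub>r G'\<^sup>T\<close> for all times, where \<open>\<Sigma>\<^sub>t\<^sub>,\<^sub>r = Cov(s\<^sub>t, s\<^sub>r)\<close>. The source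
  density factorises over the components, and each component is a finite mixture over regime
  paths of Gaussian chains, whose moments of order two are finite; hence every \<open>\<Sigma>\<^sub>t\<^sub>,\<^sub>r\<close> is
  diagonal, for both processes.

  Let \<open>S = \<Sigma>\<^sub>1\<^sub>,\<^sub>1\<close> and \<open>L = \<Sigma>\<^sub>t\<^sub>0\<^sub>,\<^sub>t\<^sub>0\<^sub>-\<^sub>l\<^sub>0\<close>. Since \<open>G\<close> and \<open>G'\<close> have full column rank and \<open>S\<close> is
  invertible, \<open>G' = G A\<close> for an invertible \<open>A\<close> with \<open>A S' A\<^sup>T = S\<close> and \<open>A L' A\<^sup>T = L\<close>. With
  \<open>B = (A\<^sup>T)\<^sup>-\<^sup>1\<close> these read \<open>S B = A S'\<close> and \<open>L B = A L'\<close>, so a nonzero entry \<open>A\<^sub>i\<^sub>j\<close> forces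
  \<open>L\<^sub>i\<^sub>i / S\<^sub>i\<^sub>i = L'\<^sub>j\<^sub>j / S'\<^sub>j\<^sub>j\<close>. These ratios are the diagonal of \<open>S\<^sup>-\<^sup>1\<^sup>/\<^sup>2 L S\<^sup>-\<^sup>1\<^sup>/\<^sup>2\<close>, assumed
  pairwise distinct, so each column of \<open>A\<close> has exactly one nonzero entry: \<open>A = P D\<^sup>-\<^sup>1\<close>.
\<close>

section \<open>Diagonal matrices and their square roots\<close>

definition diag_mat :: "('n \<Rightarrow> real) \<Rightarrow> real^'n^'n" where
  "diag_mat f = (\<chi> i j. if i = j then f i else 0)"

lemma diagonal_mat_diag_mat: "diagonal_mat (diag_mat f)"
  by (simp add: diagonal_mat_def diag_mat_def)

lemma diag_mat_nth_nth [simp]: "diag_mat f $ i $ j = (if i = j then f i else 0)"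
  by (simp add: diag_mat_def)

lemma diagonal_mat_mult_left:
  fixes D :: "real^'n^'n" and A :: "real^'m^'n"
  assumes "diagonal_mat D"
  shows "(D ** A)$i$j = D$i$i * A$i$j"
  using assms unfolding matrix_matrix_mult_def diagonal_mat_def
  by (simp add: sum.remove[of _ i])

lemma diagonal_mat_mult_right:
  fixes D :: "real^'n^'n" and A :: "real^'n^'m"
  assumes "diagonal_mat D"
  shows "(A ** D)$i$j = A$i$j * D$j$j"
  using assms unfolding matrix_matrix_mult_def diagonal_mat_def
  by (simp add: sum.remove[of _ j])

lemma diag_mat_mult: "diag_mat f ** diag_mat g = diag_mat (\<lambda>i. f i * g i)"
  by (simp add: vec_eq_iff diagonal_mat_mult_left[OF diagonal_mat_diag_mat])

lemma diag_mat_one: "diag_mat (\<lambda>_. 1) = mat 1"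
  by (simp add: vec_eq_iff mat_def)

lemma invertible_diagonal_mat_iff:
  assumes "diagonal_mat D"
  shows "invertible D \<longleftrightarrow> (\<forall>i. D$i$i \<noteq> 0)"
  using assms by (simp add: invertible_det_nz det_diagonal diagonal_mat_def)

lemma matrix_inv_eqI:
  fixes A :: "'a::semiring_1^'n^'m"
  assumes "A ** B = mat 1" "B ** A = mat 1"
  shows "matrix_inv A = B"
  unfolding matrix_inv_def
proof (rule some_equality)
  fix B' assume "A ** B' = mat 1 \<and> B' ** A = mat 1"
  then have "B' = B' ** (A ** B)" "B' ** A = mat 1" using assms by auto
  then show "B' = B" by (metis matrix_mul_assoc matrix_mul_lid)
qed (use assms in simp)

lemma matrix_inv_diag_mat:
  assumes "\<forall>i. f i \<noteq> 0"
  shows "matrix_inv (diag_mat f) = diag_mat (\<lambda>i. 1 / f i)"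
  using assms by (intro matrix_inv_eqI) (simp_all add: diag_mat_mult diag_mat_one)

lemma diag_mat_commute_comp:
  fixes R :: "real^'n^'n"
  assumes "R ** diag_mat f = diag_mat f ** R"
  shows "R ** diag_mat (\<lambda>i. g (f i)) = diag_mat (\<lambda>i. g (f i)) ** R"
proof -
  have "R$i$j * g (f j) = g (f i) * R$i$j" for i j
  proof (cases "R$i$j = 0")
    case False
    have "R$i$j * f j = f i * R$i$j"
      using assms by (metis diagonal_mat_mult_left diagonal_mat_mult_right diagonal_mat_diag_mat
          diag_mat_nth_nth)
    with False have "f i = f j" by simp
    then show ?thesis by simp
  qed simp
  then show ?thesis
    by (simp add: vec_eq_iff diagonal_mat_mult_left diagonal_mat_mult_right diagonal_mat_diag_mat)
qed

text \<open>As \<open>R\<close> and \<open>Q\<close> commute, \<open>(R + Q)(R - Q) = 0\<close>; so \<open>w = (R - Q) v\<close> satisfies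
  \<open>w \<bullet> R w + w \<bullet> Q w = 0\<close>, which forces \<open>w = 0\<close>.\<close>
lemma psd_commuting_square_root_unique:
  fixes Q R :: "real^'n^'n"
  assumes R_psd: "\<forall>x. 0 \<le> x \<bullet> (R *v x)" and Q_pd: "\<forall>x. x \<noteq> 0 \<longrightarrow> 0 < x \<bullet> (Q *v x)"
    and comm: "R ** Q = Q ** R" and sq: "R ** R = Q ** Q"
  shows "R = Q"
proof -
  have "(R - Q) *v v = 0" for v
  proof (rule ccontr)
    define w where "w = (R - Q) *v v"
    assume "w \<noteq> 0"
    have "R *v w + Q *v w = 0"
      unfolding w_def
      by (simp add: algebra_simps matrix_vector_mul_assoc comm sq)
    then have "w \<bullet> (R *v w) + w \<bullet> (Q *v w) = 0"
      by (metis inner_add_right inner_zero_right)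
    moreover have "0 \<le> w \<bullet> (R *v w)" "0 < w \<bullet> (Q *v w)"
      using R_psd Q_pd \<open>w \<noteq> 0\<close> by auto
    ultimately show False by linarith
  qed
  then show "R = Q"
    by (metis matrix_eq eq_iff_diff_eq_0 matrix_vector_mult_diff_rdistrib)
qed

lemma psd_sqrt_diag_mat:
  assumes pos: "\<forall>i. 0 < f i"
  shows "psd_sqrt (diag_mat f) = diag_mat (\<lambda>i. sqrt (f i))"
proof -
  let ?Q = "diag_mat (\<lambda>i. sqrt (f i))"
  have quad: "x \<bullet> (?Q *v x) = (\<Sum>i\<in>UNIV. sqrt (f i) * (x$i)\<^sup>2)" for x
    by (simp add: inner_vec_def matrix_vector_mult_def if_distrib if_distribR power2_eq_square
        algebra_simps cong: if_cong)
  have Q_pd: "0 < x \<bullet> (?Q *v x)" if "x \<noteq> 0" for x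
  proof -
    obtain i where "x$i \<noteq> 0" using \<open>x \<noteq> 0\<close> by (auto simp: vec_eq_iff)
    then have "0 < sqrt (f i) * (x$i)\<^sup>2" using pos by simp
    then show ?thesis
      unfolding quad using pos
      by (intro sum_pos2[where i=i]) (simp_all add: less_imp_le)
  qed
  have QQ: "?Q ** ?Q = diag_mat f"
    using pos by (simp add: diag_mat_mult less_imp_le)
  have "transpose ?Q = ?Q" by (simp add: vec_eq_iff transpose_def)
  moreover have "0 \<le> x \<bullet> (?Q *v x)" for x using Q_pd[of x] by (cases "x = 0") auto
  moreover have "R = ?Q" if "\<forall>x. 0 \<le> x \<bullet> (R *v x)" "R ** R = diag_mat f" for R
  proof (rule psd_commuting_square_root_unique)
    have "R ** diag_mat f = diag_mat f ** R" using that(2) by (metis matrix_mul_assoc)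
    then show "R ** ?Q = ?Q ** R" by (rule diag_mat_commute_comp)
  qed (use that Q_pd QQ in auto)
  ultimately show ?thesis
    unfolding psd_sqrt_def using QQ by (intro the_equality) auto
qed

lemma inv_sqrt_congruence_diagonal_entry:
  fixes S L :: "real^'n^'n"
  assumes "diagonal_mat S" and "\<forall>i. 0 < S$i$i"
  shows "(inv_sqrt S ** L ** inv_sqrt S)$i$i = L$i$i / S$i$i"
proof -
  have S: "S = diag_mat (\<lambda>i. S$i$i)"
    using assms(1) by (simp add: vec_eq_iff diagonal_mat_def)
  have "psd_sqrt S = diag_mat (\<lambda>i. sqrt (S$i$i))"
    by (subst S) (rule psd_sqrt_diag_mat[OF assms(2)])
  moreover have "\<forall>i. sqrt (S$i$i) \<noteq> 0"
    using assms(2) by (metis real_sqrt_gt_0_iff less_irrefl)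
  ultimately have "inv_sqrt S = diag_mat (\<lambda>i. 1 / sqrt (S$i$i))"
    by (simp add: inv_sqrt_def matrix_inv_diag_mat)
  then show ?thesis
    using assms(2)[rule_format, of i]
    by (simp add: diagonal_mat_mult_left diagonal_mat_mult_right diagonal_mat_diag_mat)
qed

section \<open>Identifiability from two congruences\<close>

lemma invertible_congruence_factors:
  fixes A S :: "real^'n^'n"
  assumes "invertible (A ** S ** transpose A)"
  shows "invertible A" and "invertible S"
  using assms by (simp_all add: invertible_det_nz det_mul)

lemma congruence_left_inverse:
  fixes G :: "'a::comm_semiring_1^'d^'k"
  assumes "H ** G = mat 1"
  shows "H ** (G ** X ** transpose G) ** transpose H = X"
proof -
  have "transpose G ** transpose H = mat 1"
    using assms by (metis matrix_transpose_mul transpose_mat)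
  moreover have "H ** (G ** X ** transpose G) ** transpose H = (H ** G) ** X ** (transpose G ** transpose H)"
    by (simp add: matrix_mul_assoc)
  ultimately show ?thesis using assms by simp
qed

lemma full_rank_congruence_factor:
  fixes G Gt :: "real^'d^'k" and S St :: "real^'d^'d"
  assumes rG: "rank G = CARD('d)" and rGt: "rank Gt = CARD('d)" and S: "invertible S"
    and eq: "G ** S ** transpose G = Gt ** St ** transpose Gt"
  shows "\<exists>A. invertible A \<and> Gt = G ** A"
proof -
  obtain H :: "real^'k^'d" where H: "H ** G = mat 1"
    using rG by (metis full_rank_injective matrix_left_invertible_injective)
  obtain Ht :: "real^'k^'d" where Ht: "Ht ** Gt = mat 1"
    using rGt by (metis full_rank_injective matrix_left_invertible_injective)
  define A where "A = H ** Gt"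
  have "A ** St ** transpose A = H ** (G ** S ** transpose G) ** transpose H"
    unfolding eq A_def by (simp add: matrix_transpose_mul matrix_mul_assoc)
  also have "\<dots> = S"
    using H by (rule congruence_left_inverse)
  finally have "invertible A" "invertible St"
    using S invertible_congruence_factors by blast+
  then obtain Sti where Sti: "St ** Sti = mat 1"
    unfolding invertible_def by blast
  have "Gt ** St = Gt ** St ** transpose (Ht ** Gt)"
    using Ht by simp
  also have "\<dots> = G ** S ** transpose G ** transpose Ht"
    by (simp add: matrix_transpose_mul matrix_mul_assoc eq)
  finally have GtSt: "Gt ** St = G ** S ** transpose G ** transpose Ht" .
  define M where "M = S ** transpose G ** transpose Ht ** Sti"
  have "Gt = Gt ** St ** Sti"
    using Sti by (simp flip: matrix_mul_assoc)
  also have "\<dots> = G ** M"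
    unfolding GtSt M_def by (simp add: matrix_mul_assoc)
  finally have Gt: "Gt = G ** M" .
  have "A = (H ** G) ** M"
    unfolding A_def Gt by (simp add: matrix_mul_assoc)
  then have "A = M"
    using H by simp
  with Gt \<open>invertible A\<close> show ?thesis by auto
qed

lemma congruent_diagonal_pairs_column_unique:
  fixes A S L St Lt :: "real^'n^'n"
  assumes diag: "diagonal_mat S" "diagonal_mat L" "diagonal_mat St" "diagonal_mat Lt"
    and S_inv: "invertible S" and inj: "inj (\<lambda>i. L$i$i / S$i$i)"
    and S_eq: "A ** St ** transpose A = S" and L_eq: "A ** Lt ** transpose A = L"
    and "A$i$j \<noteq> 0" "A$i'$j \<noteq> 0"
  shows "i = i'"
proof -
  have "invertible A" "invertible St"
    using S_inv S_eq invertible_congruence_factors by blast+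
  then obtain B where B: "transpose A ** B = mat 1"
    by (meson invertible_def transpose_invertible)
  have "S ** B = A ** St" "L ** B = A ** Lt"
    using S_eq L_eq B by (metis matrix_mul_assoc matrix_mul_rid)+
  then have eS: "S$k$k * B$k$j = A$k$j * St$j$j" and eL: "L$k$k * B$k$j = A$k$j * Lt$j$j" for k
    by (metis diag(1,3) diagonal_mat_mult_left diagonal_mat_mult_right,
        metis diag(2,4) diagonal_mat_mult_left diagonal_mat_mult_right)
  have S_nz: "S$k$k \<noteq> 0" for k
    using S_inv diag(1) invertible_diagonal_mat_iff by blast
  have St_nz: "St$j$j \<noteq> 0"
    using \<open>invertible St\<close> diag(3) invertible_diagonal_mat_iff by blast
  have ratio: "L$k$k / S$k$k = Lt$j$j / St$j$j" if "A$k$j \<noteq> 0" for k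
  proof -
    have "L$k$k * (A$k$j * St$j$j) = S$k$k * (A$k$j * Lt$j$j)"
      by (simp only: eS[symmetric] eL[symmetric] mult.left_commute)
    then show ?thesis using that S_nz[of k] St_nz by (simp add: field_simps)
  qed
  show "i = i'"
    using ratio[OF \<open>A$i$j \<noteq> 0\<close>] ratio[OF \<open>A$i'$j \<noteq> 0\<close>] by (intro injD[OF inj]) simp
qed

lemma invertible_nonzero_in_column_row:
  fixes A :: "'a::semiring_1^'n^'m"
  assumes "invertible A"
  shows "\<exists>i. A$i$j \<noteq> 0" and "\<exists>j. A$i$j \<noteq> 0"
proof -
  obtain A' where AA': "A ** A' = mat 1" and A'A: "A' ** A = mat 1"
    using assms invertible_def by blast
  show "\<exists>i. A$i$j \<noteq> 0"
  proof (rule ccontr)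
    assume "\<nexists>i. A$i$j \<noteq> 0"
    then have "(A' ** A)$j$j = 0" by (simp add: matrix_matrix_mult_def)
    with A'A show False by (simp add: mat_def)
  qed
  show "\<exists>j. A$i$j \<noteq> 0"
  proof (rule ccontr)
    assume "\<nexists>j. A$i$j \<noteq> 0"
    then have "(A ** A')$i$i = 0" by (simp add: matrix_matrix_mult_def)
    with AA' show False by (simp add: mat_def)
  qed
qed

lemma monomial_matrix_factorization:
  fixes A :: "real^'n^'n"
  assumes inv: "invertible A" and col: "\<And>i i' j. A$i$j \<noteq> 0 \<Longrightarrow> A$i'$j \<noteq> 0 \<Longrightarrow> i = i'"
  shows "\<exists>P D. permutation_matrix P \<and> diagonal_mat D \<and> invertible D \<and> A = P ** matrix_inv D"
proof -
  obtain \<sigma> where \<sigma>: "\<And>j. A$(\<sigma> j)$j \<noteq> 0"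
    using invertible_nonzero_in_column_row(1)[OF inv] by metis
  have \<sigma>_iff: "A$i$j \<noteq> 0 \<longleftrightarrow> i = \<sigma> j" for i j
    using \<sigma> col by blast
  have "surj \<sigma>"
    using invertible_nonzero_in_column_row(2)[OF inv] \<sigma>_iff by (auto simp: surj_def)
  then have "bij \<sigma>" by (simp add: bij_def finite_UNIV_surj_inj)
  then have perm: "\<sigma> permutes UNIV" by (rule bij_imp_permutes) simp
  define P :: "real^'n^'n" where "P = (\<chi> i j. if i = \<sigma> j then 1 else 0)"
  define D where "D = diag_mat (\<lambda>j. 1 / A$(\<sigma> j)$j)"
  have "invertible D"
    using \<sigma> by (simp add: D_def invertible_diagonal_mat_iff diagonal_mat_diag_mat)
  moreover have D_inv: "matrix_inv D = diag_mat (\<lambda>j. A$(\<sigma> j)$j)"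
    using \<sigma> by (simp add: D_def matrix_inv_diag_mat)
  have "(P ** diag_mat (\<lambda>j. A$(\<sigma> j)$j))$i$j = A$i$j" for i j
    using \<sigma>_iff[of i j] by (cases "i = \<sigma> j") (simp_all add: diagonal_mat_mult_right diagonal_mat_diag_mat P_def)
  then have "A = P ** matrix_inv D"
    by (simp add: D_inv vec_eq_iff)
  moreover have "permutation_matrix P"
    unfolding permutation_matrix_def P_def using perm by blast
  moreover have "diagonal_mat D"
    by (simp add: D_def diagonal_mat_diag_mat)
  ultimately show ?thesis by blast
qed

lemma mixing_matrix_identifiable:
  fixes G Gt :: "real^'d^'k" and S L St Lt :: "real^'d^'d"
  assumes "rank G = CARD('d)" "rank Gt = CARD('d)"
    and diag: "diagonal_mat S" "diagonal_mat L" "diagonal_mat St" "diagonal_mat Lt"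
    and "\<forall>i. S$i$i \<noteq> 0" and inj: "inj (\<lambda>i. L$i$i / S$i$i)"
    and S_eq: "G ** S ** transpose G = Gt ** St ** transpose Gt"
    and L_eq: "G ** L ** transpose G = Gt ** Lt ** transpose Gt"
  shows "\<exists>P D. permutation_matrix P \<and> diagonal_mat D \<and> invertible D \<and> Gt = G ** P ** matrix_inv D"
proof -
  have S_inv: "invertible S"
    using diag(1) \<open>\<forall>i. S$i$i \<noteq> 0\<close> invertible_diagonal_mat_iff by blast
  then obtain A where A: "invertible A" and Gt: "Gt = G ** A"
    using full_rank_congruence_factor assms(1,2) S_eq by blast
  obtain H :: "real^'k^'d" where H: "H ** G = mat 1"
    using assms(1) by (metis full_rank_injective matrix_left_invertible_injective)
  have A_congr: "A ** X ** transpose A = H ** (Gt ** X ** transpose Gt) ** transpose H" for X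
    unfolding Gt using congruence_left_inverse[OF H, of "A ** X ** transpose A"]
    by (simp add: matrix_transpose_mul matrix_mul_assoc)
  have "A ** St ** transpose A = S" "A ** Lt ** transpose A = L"
    using A_congr[of St] A_congr[of Lt]
    by (simp_all add: S_eq[symmetric] L_eq[symmetric] congruence_left_inverse[OF H])
  then have "A$i$j \<noteq> 0 \<Longrightarrow> A$i'$j \<noteq> 0 \<Longrightarrow> i = i'" for i i' j
    using congruent_diagonal_pairs_column_unique[OF diag S_inv inj] by blast
  then obtain P D where "permutation_matrix P" "diagonal_mat D" "invertible D" "A = P ** matrix_inv D"
    using monomial_matrix_factorization[OF A] by blast
  then show ?thesis
    unfolding Gt by (metis matrix_mul_assoc)
qed

section \<open>Gaussian path densities\<close>

lemma nn_integral_normal_density: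
  assumes "0 < \<sigma>"
  shows "(\<integral>\<^sup>+y. ennreal (normal_density \<mu> \<sigma> y) \<partial>lborel) = 1"
  using assms by (subst nn_integral_eq_integral) auto

lemma nn_integral_normal_density_quadratic:
  assumes "0 < \<sigma>" and "0 \<le> c"
  shows "(\<integral>\<^sup>+y. ennreal (normal_density \<mu> \<sigma> y * (c + y\<^sup>2)) \<partial>lborel) = ennreal (c + \<sigma>\<^sup>2 + \<mu>\<^sup>2)"
proof -
  have "has_bochner_integral lborel (\<lambda>y. normal_density \<mu> \<sigma> y * (y - \<mu>)\<^sup>2
      + 2 * \<mu> * (normal_density \<mu> \<sigma> y * (y - \<mu>)) + (c + \<mu>\<^sup>2) * normal_density \<mu> \<sigma> y)
      (\<sigma>\<^sup>2 + 2 * \<mu> * 0 + (c + \<mu>\<^sup>2) * 1)"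
    using normal_moment_even[OF assms(1), of \<mu> 1] normal_moment_odd[OF assms(1), of \<mu> 0] assms(1)
    by (intro has_bochner_integral_add has_bochner_integral_mult_right)
       (simp_all add: power2_eq_square has_bochner_integral_iff)
  moreover have "(\<lambda>y. normal_density \<mu> \<sigma> y * (y - \<mu>)\<^sup>2 + 2 * \<mu> * (normal_density \<mu> \<sigma> y * (y - \<mu>))
      + (c + \<mu>\<^sup>2) * normal_density \<mu> \<sigma> y) = (\<lambda>y. normal_density \<mu> \<sigma> y * (c + y\<^sup>2))"
    by (auto simp: fun_eq_iff power2_eq_square algebra_simps)
  ultimately have "has_bochner_integral lborel (\<lambda>y. normal_density \<mu> \<sigma> y * (c + y\<^sup>2)) (c + \<sigma>\<^sup>2 + \<mu>\<^sup>2)"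
    by (simp add: add.commute add.left_commute)
  then show ?thesis
    using assms(2) by (subst nn_integral_eq_integral) (auto simp: has_bochner_integral_iff)
qed

definition quadratic_weight :: "nat \<Rightarrow> (nat \<Rightarrow> real) \<Rightarrow> real" where
  "quadratic_weight n x = 1 + (\<Sum>k\<in>{1..n}. (x k)\<^sup>2)"

lemma quadratic_weight_ge_one: "1 \<le> quadratic_weight n x"
  by (simp add: quadratic_weight_def sum_nonneg)

lemma sq_le_sum_squares: "(t::nat) \<in> {1..n} \<Longrightarrow> (x t)\<^sup>2 \<le> (\<Sum>k\<in>{1..n}. (x k :: real)\<^sup>2)"
  by (rule member_le_sum) auto

lemma abs_le_quadratic_weight:
  assumes "t \<in> {1..n}"
  shows "\<bar>x t\<bar> \<le> quadratic_weight n x"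
proof -
  have "0 \<le> (\<bar>x t\<bar> - 1)\<^sup>2" by simp
  then have "\<bar>x t\<bar> \<le> 1 + (x t)\<^sup>2"
    unfolding power2_diff power2_abs by simp
  then show ?thesis
    using sq_le_sum_squares[OF assms, of x] unfolding quadratic_weight_def by linarith
qed

lemma abs_mult_le_quadratic_weight:
  assumes "t \<in> {1..n}" and "r \<in> {1..n}"
  shows "\<bar>x t * x r\<bar> \<le> quadratic_weight n x"
proof (cases "t = r")
  case True
  then show ?thesis
    using sq_le_sum_squares[OF assms(1), of x] by (simp add: quadratic_weight_def power2_eq_square)
next
  case False
  have "2 * \<bar>x t * x r\<bar> \<le> (x t)\<^sup>2 + (x r)\<^sup>2"
    using sum_squares_bound[of "\<bar>x t\<bar>" "\<bar>x r\<bar>"] by (simp add: abs_mult)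
  moreover have "(x t)\<^sup>2 + (x r)\<^sup>2 \<le> (\<Sum>k\<in>{1..n}. (x k)\<^sup>2)"
    using assms False sum_mono2[of "{1..n}" "{t, r}" "\<lambda>k. (x k)\<^sup>2"] by simp
  ultimately show ?thesis
    unfolding quadratic_weight_def by linarith
qed

lemma quadratic_weight_pos: "0 < quadratic_weight n x"
  using quadratic_weight_ge_one[of n x] by simp

lemma quadratic_weight_one: "quadratic_weight 1 x = 1 + (x 1)\<^sup>2"
  by (simp add: quadratic_weight_def)

lemma quadratic_weight_Suc:
  "quadratic_weight (Suc n) (x(Suc n := y)) = quadratic_weight n x + y\<^sup>2"
proof -
  have "(\<Sum>k\<in>{1..n}. ((x(Suc n := y)) k)\<^sup>2) = (\<Sum>k\<in>{1..n}. (x k)\<^sup>2)"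
    by (intro sum.cong) auto
  then show ?thesis
    by (simp add: quadratic_weight_def)
qed

lemma borel_measurable_quadratic_weight [measurable]:
  "quadratic_weight n \<in> borel_measurable (PiM {1..n} (\<lambda>_. lborel))"
  unfolding quadratic_weight_def
  by (intro borel_measurable_add borel_measurable_sum borel_measurable_power) auto

definition regime_path_weight :: "'d slgp \<Rightarrow> 'd \<Rightarrow> (nat \<Rightarrow> nat) \<Rightarrow> nat \<Rightarrow> real" where
  "regime_path_weight p i u n = init_law p i (u 1) * (\<Prod>t\<in>{2..n}. trans p i (u (t - 1)) (u t))"

definition path_density :: "'d slgp \<Rightarrow> 'd \<Rightarrow> (nat \<Rightarrow> nat) \<Rightarrow> nat \<Rightarrow> (nat \<Rightarrow> real) \<Rightarrow> real" where
  "path_density p i u n x =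
     normal_density (mean0 p i (u 1)) (sqrt (var0 p i (u 1))) (x 1) *
     (\<Prod>t\<in>{2..n}. normal_density (coefB p i (u t) * x (t - 1) + coefb p i (u t))
                                  (sqrt (varPsi p i (u t))) (x t))"

lemma comp_density_eq_mixture:
  "comp_density C T p i x =
     (\<Sum>u\<in>{1..T} \<rightarrow>\<^sub>E {1..C}. regime_path_weight p i u T * path_density p i u T x)"
  unfolding comp_density_def regime_path_weight_def path_density_def ..

lemma regime_path_weight_nonneg:
  assumes "valid_slgp C p" and "\<forall>t\<in>{1..n}. u t \<in> {1..C}" and "1 \<le> n"
  shows "0 \<le> regime_path_weight p i u n"
proof -
  have "0 \<le> trans p i (u (t - 1)) (u t)" if "t \<in> {2..n}" for t
  proof -
    have "t - 1 \<in> {1..n}" "t \<in> {1..n}"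
      using that by auto
    then have "u (t - 1) \<in> {1..C}" "u t \<in> {1..C}"
      using assms(2) by blast+
    then show ?thesis
      using assms(1) unfolding valid_slgp_def by blast
  qed
  moreover have "0 \<le> init_law p i (u 1)"
    using assms unfolding valid_slgp_def by auto
  ultimately show ?thesis
    unfolding regime_path_weight_def by (intro mult_nonneg_nonneg prod_nonneg) auto
qed

lemma regime_path_weight_Suc:
  assumes "1 \<le> n"
  shows "regime_path_weight p i (u(Suc n := y)) (Suc n) = regime_path_weight p i u n * trans p i (u n) y"
proof -
  have "(\<Prod>t\<in>{2..n}. trans p i ((u(Suc n := y)) (t - 1)) ((u(Suc n := y)) t)) =
        (\<Prod>t\<in>{2..n}. trans p i (u (t - 1)) (u t))"
    by (intro prod.cong) auto
  moreover have "{2..Suc n} = insert (Suc n) {2..n}"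
    using assms by auto
  ultimately show ?thesis
    using assms by (simp add: regime_path_weight_def algebra_simps)
qed

lemma sum_PiE_insert:
  assumes "a \<notin> I" "finite I" "finite (B a)" "\<And>i. i \<in> I \<Longrightarrow> finite (B i)"
  shows "(\<Sum>g\<in>Pi\<^sub>E (insert a I) B. F g) = (\<Sum>g\<in>Pi\<^sub>E I B. \<Sum>y\<in>B a. F (g(a := y)))"
proof -
  have "(\<Sum>g\<in>Pi\<^sub>E (insert a I) B. F g) = (\<Sum>(y, g)\<in>B a \<times> Pi\<^sub>E I B. F (g(a := y)))"
    using assms
    by (intro sum.reindex_bij_witness[of _ "\<lambda>(y, g). g(a := y)" "\<lambda>g. (g a, g(a := undefined))"])
       (auto simp: PiE_def extensional_def)
  also have "\<dots> = (\<Sum>g\<in>Pi\<^sub>E I B. \<Sum>y\<in>B a. F (g(a := y)))"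
    by (subst sum.cartesian_product[symmetric]) (rule sum.swap)
  finally show ?thesis .
qed

lemma sum_regime_path_weight:
  assumes v: "valid_slgp C p" and "1 \<le> n"
  shows "(\<Sum>u\<in>{1..n} \<rightarrow>\<^sub>E {1..C}. regime_path_weight p i u n) = 1"
  using assms(2)
proof (induction n rule: dec_induct)
  case base
  have "(\<Sum>u\<in>insert 1 {} \<rightarrow>\<^sub>E {1..C}. regime_path_weight p i u 1) = (\<Sum>k\<in>{1..C}. init_law p i k)"
    by (subst sum_PiE_insert) (auto simp: regime_path_weight_def)
  then show ?case
    using v unfolding valid_slgp_def by simp
next
  case (step n)
  have "(\<Sum>u\<in>{1..Suc n} \<rightarrow>\<^sub>E {1..C}. regime_path_weight p i u (Suc n)) =
      (\<Sum>u\<in>{1..n} \<rightarrow>\<^sub>E {1..C}. regime_path_weight p i u n * (\<Sum>k\<in>{1..C}. trans p i (u n) k))"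
    using step.hyps
    by (simp add: atLeastAtMostSuc_conv sum_PiE_insert regime_path_weight_Suc sum_distrib_left)
  also have "\<dots> = (\<Sum>u\<in>{1..n} \<rightarrow>\<^sub>E {1..C}. regime_path_weight p i u n)"
    using v step.hyps unfolding valid_slgp_def by (intro sum.cong) (auto simp: PiE_iff)
  finally show ?case
    using step.IH by simp
qed

lemma path_density_nonneg: "0 \<le> path_density p i u n x"
  unfolding path_density_def by (intro mult_nonneg_nonneg prod_nonneg) auto

lemma path_density_Suc:
  assumes "1 \<le> n"
  shows "path_density p i u (Suc n) (x(Suc n := y)) = path_density p i u n x *
    normal_density (coefB p i (u (Suc n)) * x n + coefb p i (u (Suc n))) (sqrt (varPsi p i (u (Suc n)))) y"
proof -
  have "(\<Prod>t\<in>{2..n}. normal_density (coefB p i (u t) * (x(Suc n := y)) (t - 1) + coefb p i (u t))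
                                   (sqrt (varPsi p i (u t))) ((x(Suc n := y)) t)) =
        (\<Prod>t\<in>{2..n}. normal_density (coefB p i (u t) * x (t - 1) + coefb p i (u t))
                                   (sqrt (varPsi p i (u t))) (x t))"
    by (intro prod.cong) auto
  moreover have "{2..Suc n} = insert (Suc n) {2..n}"
    using assms by auto
  ultimately show ?thesis
    using assms by (simp add: path_density_def algebra_simps)
qed

lemma path_density_one:
  "path_density p i u 1 x = normal_density (mean0 p i (u 1)) (sqrt (var0 p i (u 1))) (x 1)"
  by (simp add: path_density_def)

lemma path_density_restrict:
  assumes "1 \<le> n"
  shows "path_density p i u n (restrict x {1..n}) = path_density p i u n x"
proof -
  have "t - 1 \<in> {1..n}" if "t \<in> {2..n}" for t
    using that by auto
  then show ?thesis
    using assms unfolding path_density_def by (auto intro!: prod.cong arg_cong2[where f="(*)"])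
qed

lemma borel_measurable_path_density:
  assumes "1 \<le> n" and "n \<le> m"
  shows "path_density p i u n \<in> borel_measurable (PiM {1..m} (\<lambda>_. lborel))"
proof -
  have x1: "(\<lambda>x. x 1) \<in> borel_measurable (PiM {1..m} (\<lambda>_. lborel))"
    using assms by auto
  have "(\<lambda>x. normal_density (coefB p i (u t) * x (t - 1) + coefb p i (u t)) (sqrt (varPsi p i (u t))) (x t))
      \<in> borel_measurable (PiM {1..m} (\<lambda>_. lborel))" if "t \<in> {2..n}" for t
  proof -
    have "t - 1 \<in> {1..m}" "t \<in> {1..m}"
      using that assms by auto
    then have [measurable]: "(\<lambda>x. x (t - 1)) \<in> borel_measurable (PiM {1..m} (\<lambda>_. lborel))"
        "(\<lambda>x. x t) \<in> borel_measurable (PiM {1..m} (\<lambda>_. lborel))"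
      by simp_all
    show ?thesis unfolding normal_density_def by measurable
  qed
  then show ?thesis
    unfolding path_density_def
    by (intro borel_measurable_times borel_measurable_prod measurable_compose[OF x1]) auto
qed

lemma nn_integral_path_density_Suc:
  assumes "1 \<le> n" and h: "h \<in> borel_measurable (PiM {1..Suc n} (\<lambda>_. lborel))"
  shows "(\<integral>\<^sup>+x. ennreal (path_density p i u (Suc n) x * h x) \<partial>PiM {1..Suc n} (\<lambda>_. lborel)) =
    (\<integral>\<^sup>+x. \<integral>\<^sup>+y. ennreal (path_density p i u n x *
        normal_density (coefB p i (u (Suc n)) * x n + coefb p i (u (Suc n))) (sqrt (varPsi p i (u (Suc n)))) y *
        h (x(Suc n := y))) \<partial>lborel \<partial>PiM {1..n} (\<lambda>_. lborel))"
proof -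
  interpret product_sigma_finite "\<lambda>_::nat. lborel :: real measure" by standard
  have ins: "{1..Suc n} = insert (Suc n) {1..n}" by auto
  have "path_density p i u (Suc n) \<in> borel_measurable (PiM (insert (Suc n) {1..n}) (\<lambda>_. lborel))"
    unfolding ins[symmetric] using assms(1) by (intro borel_measurable_path_density) auto
  then show ?thesis
    using h assms(1) unfolding ins by (subst product_nn_integral_insert) (auto simp: path_density_Suc)
qed

lemma nn_integral_path_density:
  assumes v: "valid_slgp C p" and "1 \<le> n" and "\<forall>t\<in>{1..n}. u t \<in> {1..C}"
  shows "(\<integral>\<^sup>+x. ennreal (path_density p i u n x) \<partial>PiM {1..n} (\<lambda>_. lborel)) = 1"
  using assms(2,3)
proof (induction n rule: dec_induct)
  interpret product_sigma_finite "\<lambda>_::nat. lborel :: real measure" by standard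
  case base
  then have "0 < sqrt (var0 p i (u 1))"
    using v unfolding valid_slgp_def by auto
  have "(\<integral>\<^sup>+x. ennreal (path_density p i u 1 x) \<partial>PiM {1} (\<lambda>_. lborel)) =
      (\<integral>\<^sup>+y. ennreal (normal_density (mean0 p i (u 1)) (sqrt (var0 p i (u 1))) y) \<partial>lborel)"
    unfolding path_density_one by (rule product_nn_integral_singleton) simp
  then show ?case
    using \<open>0 < sqrt (var0 p i (u 1))\<close> by (simp add: nn_integral_normal_density)
next
  case (step n)
  have "0 < sqrt (varPsi p i (u (Suc n)))"
    using v step.prems unfolding valid_slgp_def by auto
  have "(\<integral>\<^sup>+x. ennreal (path_density p i u (Suc n) x) \<partial>PiM {1..Suc n} (\<lambda>_. lborel)) =
      (\<integral>\<^sup>+x. ennreal (path_density p i u (Suc n) x * 1) \<partial>PiM {1..Suc n} (\<lambda>_. lborel))"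
    by simp
  also have "\<dots> = (\<integral>\<^sup>+x. \<integral>\<^sup>+y. ennreal (path_density p i u n x) * ennreal
      (normal_density (coefB p i (u (Suc n)) * x n + coefb p i (u (Suc n))) (sqrt (varPsi p i (u (Suc n)))) y)
      \<partial>lborel \<partial>PiM {1..n} (\<lambda>_. lborel))"
    using step.hyps by (subst nn_integral_path_density_Suc) (simp_all add: ennreal_mult path_density_nonneg)
  also have "\<dots> = (\<integral>\<^sup>+x. ennreal (path_density p i u n x) \<partial>PiM {1..n} (\<lambda>_. lborel))"
    using \<open>0 < sqrt (varPsi p i (u (Suc n)))\<close> by (simp add: nn_integral_cmult nn_integral_normal_density)
  finally show ?case
    using step.IH step.prems by simp
qed

lemma quadratic_weight_transition_bound:
  assumes "1 \<le> n" and "0 \<le> v"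
  shows "quadratic_weight n x + v + (a * x n + b)\<^sup>2 \<le> (1 + v + 2 * a\<^sup>2 + 2 * b\<^sup>2) * quadratic_weight n x"
proof -
  let ?Q = "quadratic_weight n x"
  have "(a * x n + b)\<^sup>2 \<le> 2 * a\<^sup>2 * (x n)\<^sup>2 + 2 * b\<^sup>2"
    using zero_le_power2[of "a * x n - b"] by (simp add: power2_eq_square algebra_simps)
  moreover have "(x n)\<^sup>2 \<le> ?Q"
    using sq_le_sum_squares[of n n x] assms(1) by (simp add: quadratic_weight_def)
  then have "2 * a\<^sup>2 * (x n)\<^sup>2 \<le> 2 * a\<^sup>2 * ?Q"
    by (rule mult_left_mono) simp
  moreover have "v * 1 \<le> v * ?Q" "2 * b\<^sup>2 * 1 \<le> 2 * b\<^sup>2 * ?Q"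
    using assms(2) quadratic_weight_ge_one by (intro mult_left_mono; simp)+
  ultimately show ?thesis
    by (simp add: algebra_simps)
qed

lemma nn_integral_path_density_Suc_quadratic_weight:
  assumes "1 \<le> n" and "0 < varPsi p i (u (Suc n))"
  shows "(\<integral>\<^sup>+x. ennreal (path_density p i u (Suc n) x * quadratic_weight (Suc n) x) \<partial>PiM {1..Suc n} (\<lambda>_. lborel)) =
    (\<integral>\<^sup>+x. ennreal (path_density p i u n x * (quadratic_weight n x + varPsi p i (u (Suc n)) +
        (coefB p i (u (Suc n)) * x n + coefb p i (u (Suc n)))\<^sup>2)) \<partial>PiM {1..n} (\<lambda>_. lborel))"
proof -
  let ?\<mu> = "\<lambda>x. coefB p i (u (Suc n)) * x n + coefb p i (u (Suc n))"
  let ?\<sigma> = "sqrt (varPsi p i (u (Suc n)))"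
  have "(\<integral>\<^sup>+x. ennreal (path_density p i u (Suc n) x * quadratic_weight (Suc n) x) \<partial>PiM {1..Suc n} (\<lambda>_. lborel))
      = (\<integral>\<^sup>+x. \<integral>\<^sup>+y. ennreal (path_density p i u n x) *
          ennreal (normal_density (?\<mu> x) ?\<sigma> y * (quadratic_weight n x + y\<^sup>2)) \<partial>lborel \<partial>PiM {1..n} (\<lambda>_. lborel))"
    using assms(1) borel_measurable_quadratic_weight[of "Suc n"]
    by (subst nn_integral_path_density_Suc)
       (simp_all add: quadratic_weight_Suc ennreal_mult[symmetric] path_density_nonneg mult.assoc
         quadratic_weight_pos less_imp_le)
  also have "\<dots> = (\<integral>\<^sup>+x. ennreal (path_density p i u n x * (quadratic_weight n x + ?\<sigma>\<^sup>2 + (?\<mu> x)\<^sup>2)) \<partial>PiM {1..n} (\<lambda>_. lborel))"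
  proof (rule nn_integral_cong)
    fix x
    show "(\<integral>\<^sup>+y. ennreal (path_density p i u n x) *
          ennreal (normal_density (?\<mu> x) ?\<sigma> y * (quadratic_weight n x + y\<^sup>2)) \<partial>lborel) =
        ennreal (path_density p i u n x * (quadratic_weight n x + ?\<sigma>\<^sup>2 + (?\<mu> x)\<^sup>2))"
      using assms(2) quadratic_weight_pos[of n x]
      by (subst nn_integral_cmult, measurable, subst nn_integral_normal_density_quadratic)
         (simp_all add: less_imp_le ennreal_mult path_density_nonneg)
  qed
  finally show ?thesis
    using assms(2) by simp
qed

lemma nn_integral_path_density_quadratic_weight_finite:
  assumes v: "valid_slgp C p" and "1 \<le> n" and "\<forall>t\<in>{1..n}. u t \<in> {1..C}"
  shows "(\<integral>\<^sup>+x. ennreal (path_density p i u n x * quadratic_weight n x) \<partial>PiM {1..n} (\<lambda>_. lborel)) < \<infinity>"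
  using assms(2,3)
proof (induction n rule: dec_induct)
  interpret product_sigma_finite "\<lambda>_::nat. lborel :: real measure" by standard
  case base
  then have "0 < sqrt (var0 p i (u 1))"
    using v unfolding valid_slgp_def by auto
  have "(\<integral>\<^sup>+x. ennreal (path_density p i u 1 x * quadratic_weight 1 x) \<partial>PiM {1} (\<lambda>_. lborel)) =
      (\<integral>\<^sup>+y. ennreal (normal_density (mean0 p i (u 1)) (sqrt (var0 p i (u 1))) y * (1 + y\<^sup>2)) \<partial>lborel)"
    unfolding path_density_one quadratic_weight_one by (rule product_nn_integral_singleton) simp
  then show ?case
    using \<open>0 < sqrt (var0 p i (u 1))\<close> by (simp add: nn_integral_normal_density_quadratic)
next
  case (step n)
  define \<psi> where "\<psi> = varPsi p i (u (Suc n))"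
  define K where "K = 1 + \<psi> + 2 * (coefB p i (u (Suc n)))\<^sup>2 + 2 * (coefb p i (u (Suc n)))\<^sup>2"
  have "0 < \<psi>"
    using v step.prems unfolding valid_slgp_def \<psi>_def by auto
  have [measurable]: "path_density p i u n \<in> borel_measurable (PiM {1..n} (\<lambda>_. lborel))"
    using step.hyps by (intro borel_measurable_path_density) auto
  have "(\<integral>\<^sup>+x. ennreal (path_density p i u (Suc n) x * quadratic_weight (Suc n) x) \<partial>PiM {1..Suc n} (\<lambda>_. lborel))
      \<le> (\<integral>\<^sup>+x. ennreal K * ennreal (path_density p i u n x * quadratic_weight n x) \<partial>PiM {1..n} (\<lambda>_. lborel))"
    unfolding nn_integral_path_density_Suc_quadratic_weight[where p=p and i=i and u=u,
        OF step.hyps(1) \<open>0 < \<psi>\<close>[unfolded \<psi>_def]]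
  proof (intro nn_integral_mono)
    fix x
    have "path_density p i u n x * (quadratic_weight n x + \<psi> + (coefB p i (u (Suc n)) * x n + coefb p i (u (Suc n)))\<^sup>2)
        \<le> path_density p i u n x * (K * quadratic_weight n x)"
      unfolding K_def using step.hyps \<open>0 < \<psi>\<close>
      by (intro mult_left_mono[OF quadratic_weight_transition_bound path_density_nonneg]) auto
    moreover have "0 \<le> K" by (simp add: K_def \<open>0 < \<psi>\<close> less_imp_le)
    ultimately show "ennreal (path_density p i u n x * (quadratic_weight n x + varPsi p i (u (Suc n)) +
          (coefB p i (u (Suc n)) * x n + coefb p i (u (Suc n)))\<^sup>2))
        \<le> ennreal K * ennreal (path_density p i u n x * quadratic_weight n x)"
      by (simp add: \<psi>_def ennreal_mult'[symmetric] ennreal_leI mult.left_commute)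
  qed
  also have "\<dots> = ennreal K * (\<integral>\<^sup>+x. ennreal (path_density p i u n x * quadratic_weight n x) \<partial>PiM {1..n} (\<lambda>_. lborel))"
    by (rule nn_integral_cmult) measurable
  also have "\<dots> < \<infinity>"
    using step.IH step.prems by (simp add: ennreal_mult_less_top)
  finally show ?case .
qed

lemma integrable_path_density_mult:
  assumes v: "valid_slgp C p" and n: "1 \<le> n" and u: "\<forall>t\<in>{1..n}. u t \<in> {1..C}"
    and q: "q \<in> borel_measurable (PiM {1..n} (\<lambda>_. lborel))"
    and q_bound: "\<And>x. \<bar>q x\<bar> \<le> quadratic_weight n x"
  shows "integrable (PiM {1..n} (\<lambda>_. lborel)) (\<lambda>x. path_density p i u n x * q x)"
proof (rule Bochner_Integration.integrable_bound)
  have pd: "path_density p i u n \<in> borel_measurable (PiM {1..n} (\<lambda>_. lborel))"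
    using n by (rule borel_measurable_path_density) simp
  show "integrable (PiM {1..n} (\<lambda>_. lborel)) (\<lambda>x. path_density p i u n x * quadratic_weight n x)"
    using nn_integral_path_density_quadratic_weight_finite[OF v n u]
      borel_measurable_times[OF pd borel_measurable_quadratic_weight]
    by (intro integrableI_nonneg)
       (auto simp: path_density_nonneg quadratic_weight_ge_one order.trans[OF zero_le_one])
  show "(\<lambda>x. path_density p i u n x * q x) \<in> borel_measurable (PiM {1..n} (\<lambda>_. lborel))"
    using pd q by (rule borel_measurable_times)
  show "AE x in PiM {1..n} (\<lambda>_. lborel). norm (path_density p i u n x * q x)
      \<le> norm (path_density p i u n x * quadratic_weight n x)"
    using q_bound path_density_nonneg quadratic_weight_ge_one
    by (intro AE_I2) (simp add: abs_mult mult_left_mono order.trans[OF zero_le_one])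
qed

lemma integral_path_density:
  assumes v: "valid_slgp C p" and n: "1 \<le> n" and u: "\<forall>t\<in>{1..n}. u t \<in> {1..C}"
  shows "(\<integral>x. path_density p i u n x \<partial>PiM {1..n} (\<lambda>_. lborel)) = 1"
proof -
  have "integrable (PiM {1..n} (\<lambda>_. lborel)) (\<lambda>x. path_density p i u n x * 1)"
    using quadratic_weight_ge_one by (intro integrable_path_density_mult[OF v n u]) auto
  then have "ennreal (\<integral>x. path_density p i u n x \<partial>PiM {1..n} (\<lambda>_. lborel)) = 1"
    using nn_integral_path_density[OF v n u]
    by (subst nn_integral_eq_integral[symmetric]) (auto simp: path_density_nonneg)
  then show ?thesis
    by (simp add: integral_nonneg path_density_nonneg)
qed

lemma comp_density_nonneg:
  assumes "valid_slgp C p" and "1 \<le> T"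
  shows "0 \<le> comp_density C T p i x"
  unfolding comp_density_eq_mixture using assms
  by (intro sum_nonneg mult_nonneg_nonneg regime_path_weight_nonneg path_density_nonneg) (auto simp: PiE_iff)

lemma borel_measurable_comp_density:
  assumes "1 \<le> T"
  shows "comp_density C T p i \<in> borel_measurable (PiM {1..T} (\<lambda>_. lborel))"
  unfolding comp_density_eq_mixture[abs_def] using assms
  by (intro borel_measurable_sum borel_measurable_times borel_measurable_path_density) auto

lemma comp_density_restrict:
  assumes "1 \<le> T"
  shows "comp_density C T p i (restrict x {1..T}) = comp_density C T p i x"
  by (simp only: comp_density_eq_mixture path_density_restrict[OF assms])

lemma integrable_comp_density_mult:
  assumes v: "valid_slgp C p" and T: "1 \<le> T"
    and q: "q \<in> borel_measurable (PiM {1..T} (\<lambda>_. lborel))"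
    and q_bound: "\<And>x. \<bar>q x\<bar> \<le> quadratic_weight T x"
  shows "integrable (PiM {1..T} (\<lambda>_. lborel)) (\<lambda>x. comp_density C T p i x * q x)"
  unfolding comp_density_eq_mixture sum_distrib_right mult.assoc
  using integrable_path_density_mult[OF v T _ q q_bound]
  by (intro Bochner_Integration.integrable_sum integrable_mult_right) (auto simp: PiE_iff)

lemma integral_comp_density:
  assumes v: "valid_slgp C p" and T: "1 \<le> T"
  shows "(\<integral>x. comp_density C T p i x \<partial>PiM {1..T} (\<lambda>_. lborel)) = 1"
proof -
  have "integrable (PiM {1..T} (\<lambda>_. lborel)) (\<lambda>x. path_density p i u T x * 1)"
    if "u \<in> {1..T} \<rightarrow>\<^sub>E {1..C}" for u
    using that quadratic_weight_ge_one by (intro integrable_path_density_mult[OF v T]) (auto simp: PiE_iff)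
  then have "(\<integral>x. comp_density C T p i x \<partial>PiM {1..T} (\<lambda>_. lborel)) =
      (\<Sum>u\<in>{1..T} \<rightarrow>\<^sub>E {1..C}. regime_path_weight p i u T * (\<integral>x. path_density p i u T x \<partial>PiM {1..T} (\<lambda>_. lborel)))"
    unfolding comp_density_eq_mixture by (subst Bochner_Integration.integral_sum) auto
  also have "\<dots> = (\<Sum>u\<in>{1..T} \<rightarrow>\<^sub>E {1..C}. regime_path_weight p i u T)"
    using integral_path_density[OF v T] by (intro sum.cong) (auto simp: PiE_iff)
  finally show ?thesis
    using sum_regime_path_weight[OF v T] by simp
qed

section \<open>Componentwise products of Lebesgue measures\<close>

lemma borel_measurable_vec_lambda:
  fixes f :: "'a \<Rightarrow> 'd::finite \<Rightarrow> real"
  assumes "\<And>i. (\<lambda>x. f x i) \<in> borel_measurable M"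
  shows "(\<lambda>x. \<chi> i. f x i) \<in> borel_measurable M"
proof -
  have "(\<chi> i. f x i) = (\<Sum>j\<in>UNIV. f x j *\<^sub>R axis j (1::real))" for x
    using basis_expansion[of "\<chi> i. f x i"] by (simp add: scalar_mult_eq_scaleR)
  moreover have "(\<lambda>x. \<Sum>j\<in>UNIV. f x j *\<^sub>R axis j (1::real)) \<in> borel_measurable M"
    by (intro borel_measurable_sum borel_measurable_scaleR assms borel_measurable_const)
  ultimately show ?thesis by simp
qed

lemma measurable_vec_transpose:
  fixes I :: "'i set"
  shows "(\<lambda>y. \<lambda>t\<in>I. \<chi> i. y i t) \<in>
     measurable (PiM (UNIV::'d::finite set) (\<lambda>_. PiM I (\<lambda>_. lborel::real measure))) (PiM I (\<lambda>_. lborel))"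
proof (rule measurable_restrict)
  let ?Q = "PiM (UNIV::'d set) (\<lambda>_. PiM I (\<lambda>_. lborel::real measure))"
  fix t assume "t \<in> I"
  have "(\<lambda>y::'d \<Rightarrow> 'i \<Rightarrow> real. \<chi> i. y i t) \<in> borel_measurable ?Q"
  proof (rule borel_measurable_vec_lambda)
    fix i :: 'd
    show "(\<lambda>y::'d \<Rightarrow> 'i \<Rightarrow> real. y i t) \<in> borel_measurable ?Q"
      using \<open>t \<in> I\<close> by (intro measurable_compose[OF measurable_component_singleton[of i]]) auto
  qed
  then show "(\<lambda>y::'d \<Rightarrow> 'i \<Rightarrow> real. \<chi> i. y i t) \<in> measurable ?Q lborel"
    by simp
qed

lemma measurable_vec_component:
  "(\<lambda>s. \<lambda>t\<in>I. (s t :: real^'d::finite) $ i) \<in> measurable (PiM I (\<lambda>_. lborel)) (PiM I (\<lambda>_. lborel))"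
proof (rule measurable_restrict)
  fix t assume "t \<in> I"
  then have "(\<lambda>s. s t) \<in> measurable (PiM I (\<lambda>_. lborel)) (borel :: (real^'d) measure)"
    by simp
  then have "(\<lambda>s. (s t :: real^'d) $ i) \<in> borel_measurable (PiM I (\<lambda>_. lborel))"
    by (rule measurable_compose) measurable
  then show "(\<lambda>s. (s t :: real^'d) $ i) \<in> measurable (PiM I (\<lambda>_. lborel)) lborel"
    by simp
qed

lemma emeasure_lborel_box_cart:
  fixes l u :: "real^'d::finite"
  shows "emeasure lborel (box l u) = (\<Prod>i\<in>UNIV. emeasure lborel {l$i<..<u$i})"
proof (cases "\<forall>i. l$i \<le> u$i")
  case True
  then have "l \<in> cbox l u"
    by (simp add: mem_box_cart)
  then have "cbox l u \<noteq> {}"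
    by blast
  have "emeasure lborel (box l u) = emeasure lborel (cbox l u)"
    by (simp only: emeasure_lborel_box_eq emeasure_lborel_cbox_eq)
  also have "\<dots> = ennreal (Henstock_Kurzweil_Integration.content (cbox l u))"
    using emeasure_lborel_cbox_finite[of l u] by (intro emeasure_eq_ennreal_measure) simp
  also have "\<dots> = (\<Prod>i\<in>UNIV. ennreal (u$i - l$i))"
    using True \<open>cbox l u \<noteq> {}\<close> by (simp add: content_cbox_cart prod_ennreal)
  finally show ?thesis
    using True by simp
next
  case False
  then obtain i where i: "u$i < l$i" by (auto simp: not_le)
  then have "box l u = {}"
    by (auto simp: mem_box_cart dest!: spec[of _ i])
  moreover have "emeasure lborel {l$i<..<u$i} = 0"
    using i by simp
  ultimately show ?thesis
    by auto
qed

lemma sets_PiM_lborel_boxes: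
  fixes I :: "'i set"
  assumes "finite I"
  shows "sets (PiM I (\<lambda>_. lborel::'a::euclidean_space measure)) =
    sigma_sets (PiE I (\<lambda>_. UNIV)) {PiE I A | A. \<forall>t\<in>I. A t \<in> range (\<lambda>(a, b). box a b)}"
proof -
  let ?B = "range (\<lambda>(a, b). box a b :: 'a set)"
  let ?E = "{{f \<in> PiE I (\<lambda>_. UNIV). \<forall>i\<in>J. f i \<in> A i} | A J. J \<in> {I} \<and> A \<in> Pi J (\<lambda>_. ?B)}"
  have "sets (PiM I (\<lambda>_. lborel::'a measure)) = sets (PiM I (\<lambda>_. sigma UNIV ?B))"
    by (intro sets_PiM_cong) (simp_all add: borel_eq_box[symmetric])
  also have "\<dots> = sets (sigma (PiE I (\<lambda>_. UNIV)) ?E)"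
  proof (rule sets_PiM_sigma)
    show "\<exists>S\<subseteq>?B. countable S \<and> UNIV = \<Union>S"
      by (intro exI[of _ "range (\<lambda>n::nat. box (- (real n *\<^sub>R One)) (real n *\<^sub>R One))"])
         (auto simp: UN_box_eq_UNIV)
  qed (use assms in auto)
  also have "?E = {PiE I A | A. \<forall>t\<in>I. A t \<in> ?B}"
  proof -
    have rect: "{f \<in> PiE I (\<lambda>_. UNIV). \<forall>t\<in>I. f t \<in> A t} = PiE I A" for A :: "'i \<Rightarrow> 'a set"
      by (auto simp: PiE_def Pi_def)
    show ?thesis by (simp add: rect Pi_iff)
  qed
  also have "sets (sigma (PiE I (\<lambda>_. UNIV)) {PiE I A | A. \<forall>t\<in>I. A t \<in> ?B}) =
      sigma_sets (PiE I (\<lambda>_. UNIV)) {PiE I A | A. \<forall>t\<in>I. A t \<in> ?B}"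
    by (rule sets_measure_of) (auto simp: PiE_def)
  finally show ?thesis .
qed

lemma Int_stable_PiE_boxes:
  fixes I :: "'i set"
  shows "Int_stable {PiE I A | A. \<forall>t\<in>I. A t \<in> range (\<lambda>(a, b). box a b :: 'a::euclidean_space set)}"
proof (rule Int_stableI)
  have box_Int: "X \<inter> Y \<in> range (\<lambda>(a, b). box a b :: 'a set)"
    if "X \<in> range (\<lambda>(a, b). box a b)" "Y \<in> range (\<lambda>(a, b). box a b)" for X Y
  proof -
    from that obtain x y where "X = (\<lambda>(a, b). box a b) x" "Y = (\<lambda>(a, b). box a b) y"
      by blast
    moreover obtain a b c d where "x = (a, b)" "y = (c, d)"
      by (cases x, cases y)
    ultimately have "X \<inter> Y = (\<lambda>(a, b). box a b) ((\<Sum>i\<in>Basis. max (a\<bullet>i) (c\<bullet>i) *\<^sub>R i), (\<Sum>i\<in>Basis. min (b\<bullet>i) (d\<bullet>i) *\<^sub>R i))"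
      by (simp add: box_Int_box)
    then show ?thesis by blast
  qed
  fix X Y :: "('i \<Rightarrow> 'a) set"
  assume "X \<in> {PiE I A | A. \<forall>t\<in>I. A t \<in> range (\<lambda>(a, b). box a b)}"
    and "Y \<in> {PiE I A | A. \<forall>t\<in>I. A t \<in> range (\<lambda>(a, b). box a b)}"
  then obtain A B where XY: "X = PiE I A" "Y = PiE I B"
    and AB: "\<forall>t\<in>I. A t \<in> range (\<lambda>(a, b). box a b)" "\<forall>t\<in>I. B t \<in> range (\<lambda>(a, b). box a b)"
    by blast
  have "\<forall>t\<in>I. A t \<inter> B t \<in> range (\<lambda>(a, b). box a b)"
  proof
    fix t assume "t \<in> I"
    with AB show "A t \<inter> B t \<in> range (\<lambda>(a, b). box a b)"
      by (intro box_Int) auto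
  qed
  then show "X \<inter> Y \<in> {PiE I A | A. \<forall>t\<in>I. A t \<in> range (\<lambda>(a, b). box a b)}"
    unfolding XY PiE_Int by blast
qed

lemma UN_PiE_cubes_eq:
  fixes I :: "'i set"
  assumes "finite I"
  shows "(\<Union>n::nat. PiE I (\<lambda>_. box (- (real n *\<^sub>R One)) (real n *\<^sub>R One) :: 'a::euclidean_space set)) =
    PiE I (\<lambda>_. UNIV)"
proof (intro equalityI subsetI)
  fix f assume "f \<in> PiE I (\<lambda>_::'i. UNIV :: 'a set)"
  define n where "n = nat \<lceil>\<Sum>t\<in>I. norm (f t)\<rceil> + 1"
  have "f t \<in> box (- (real n *\<^sub>R One)) (real n *\<^sub>R One)" if "t \<in> I" for t
  proof -
    have "norm (f t) \<le> (\<Sum>t\<in>I. norm (f t))"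
      using that assms by (intro member_le_sum) auto
    then have "norm (f t) < real n"
      unfolding n_def using real_nat_ceiling_ge[of "\<Sum>t\<in>I. norm (f t)"] by linarith
    then have "\<forall>b\<in>Basis. - real n < f t \<bullet> b \<and> f t \<bullet> b < real n"
      using abs_le_D1[OF Basis_le_norm] abs_le_D2[OF Basis_le_norm] by (smt (verit))
    then show ?thesis
      by (simp add: mem_box inner_sum_left inner_Basis sum.If_cases)
  qed
  with \<open>f \<in> PiE I (\<lambda>_. UNIV)\<close> show "f \<in> (\<Union>n::nat. PiE I (\<lambda>_. box (- (real n *\<^sub>R One)) (real n *\<^sub>R One)))"
    by (auto simp: PiE_iff)
qed auto

lemma emeasure_PiM_cube_finite:
  fixes I :: "'i set"
  assumes "finite I"
  shows "emeasure (PiM I (\<lambda>_. lborel))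
    (PiE I (\<lambda>_. box (- (real n *\<^sub>R One)) (real n *\<^sub>R One) :: 'a::euclidean_space set)) \<noteq> \<infinity>"
proof -
  interpret product_sigma_finite "\<lambda>_::'i. lborel::'a measure"
    by standard
  have "emeasure (PiM I (\<lambda>_. lborel)) (PiE I (\<lambda>_. box (- (real n *\<^sub>R One)) (real n *\<^sub>R One) :: 'a set)) =
      (\<Prod>t\<in>I. emeasure lborel (box (- (real n *\<^sub>R One)) (real n *\<^sub>R One :: 'a)))"
    by (rule emeasure_PiM[OF assms]) simp
  then show ?thesis
    using emeasure_lborel_box_finite[of "- (real n *\<^sub>R One)" "real n *\<^sub>R One :: 'a"]
    by (simp add: ennreal_prod_eq_top power_eq_top_ennreal less_top del: emeasure_lborel_box)
qed

lemma vimage_vec_transpose_PiE_box: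
  fixes I :: "'i set" and l u :: "'i \<Rightarrow> real^'d::finite"
  shows "(\<lambda>y. \<lambda>t\<in>I. \<chi> i. y i t) -` PiE I (\<lambda>t. box (l t) (u t)) \<inter>
      space (PiM (UNIV::'d set) (\<lambda>_. PiM I (\<lambda>_. lborel::real measure))) =
    PiE UNIV (\<lambda>i. PiE I (\<lambda>t. {l t$i<..<u t$i}))"
proof (rule set_eqI)
  fix y :: "'d \<Rightarrow> 'i \<Rightarrow> real"
  have "y \<in> PiE UNIV (\<lambda>i. PiE I (\<lambda>t. {l t$i<..<u t$i})) \<longleftrightarrow>
      (\<forall>i. (\<forall>t\<in>I. l t$i < y i t \<and> y i t < u t$i) \<and> y i \<in> extensional I)"
    by (simp add: PiE_iff)
  moreover have "(\<lambda>t\<in>I. \<chi> i. y i t) \<in> PiE I (\<lambda>t. box (l t) (u t)) \<longleftrightarrow>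
      (\<forall>t\<in>I. \<forall>i. l t$i < y i t \<and> y i t < u t$i)"
    by (simp add: PiE_iff mem_box_cart)
  moreover have "y \<in> space (PiM (UNIV::'d set) (\<lambda>_. PiM I (\<lambda>_. lborel::real measure))) \<longleftrightarrow>
      (\<forall>i. y i \<in> extensional I)"
    by (simp add: space_PiM PiE_iff)
  ultimately show "y \<in> (\<lambda>y. \<lambda>t\<in>I. \<chi> i. y i t) -` PiE I (\<lambda>t. box (l t) (u t)) \<inter>
      space (PiM UNIV (\<lambda>_. PiM I (\<lambda>_. lborel))) \<longleftrightarrow> y \<in> PiE UNIV (\<lambda>i. PiE I (\<lambda>t. {l t$i<..<u t$i}))"
    unfolding Int_iff vimage_eq by blast
qed

lemma emeasure_distr_vec_transpose_PiE_box:
  fixes I :: "'i set" and l u :: "'i \<Rightarrow> real^'d::finite"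
  assumes I: "finite I"
  shows "emeasure (distr (PiM (UNIV::'d set) (\<lambda>_. PiM I (\<lambda>_. lborel::real measure))) (PiM I (\<lambda>_. lborel))
      (\<lambda>y. \<lambda>t\<in>I. \<chi> i. y i t)) (PiE I (\<lambda>t. box (l t) (u t))) =
    emeasure (PiM I (\<lambda>_. lborel)) (PiE I (\<lambda>t. box (l t) (u t)))"
proof -
  let ?R = "PiM I (\<lambda>_. lborel::real measure)"
  let ?Q = "PiM (UNIV::'d set) (\<lambda>_. ?R)"
  let ?\<phi> = "\<lambda>y::'d \<Rightarrow> 'i \<Rightarrow> real. \<lambda>t\<in>I. \<chi> i. y i t"
  let ?X = "PiE I (\<lambda>t. box (l t) (u t))"
  interpret L: product_sigma_finite "\<lambda>_::'i. lborel::real measure" by standard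
  interpret V: product_sigma_finite "\<lambda>_::'i. lborel::(real^'d) measure" by standard
  interpret Q: product_sigma_finite "\<lambda>_::'d. ?R"
    using L.sigma_finite[OF I] by (simp add: product_sigma_finite_def)
  have "emeasure (PiM I (\<lambda>_. lborel)) ?X = (\<Prod>t\<in>I. emeasure lborel (box (l t) (u t)))"
    by (rule V.emeasure_PiM[OF I]) simp
  also have "\<dots> = (\<Prod>t\<in>I. \<Prod>i\<in>UNIV. emeasure lborel {l t$i<..<u t$i})"
    by (rule prod.cong[OF refl], rule emeasure_lborel_box_cart)
  also have "\<dots> = (\<Prod>i\<in>UNIV. \<Prod>t\<in>I. emeasure lborel {l t$i<..<u t$i})"
    by (rule prod.swap)
  also have "\<dots> = (\<Prod>i\<in>UNIV. emeasure ?R (PiE I (\<lambda>t. {l t$i<..<u t$i})))"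
    by (rule prod.cong[OF refl], rule L.emeasure_PiM[OF I, symmetric]) simp
  also have "\<dots> = emeasure ?Q (PiE UNIV (\<lambda>i. PiE I (\<lambda>t. {l t$i<..<u t$i})))"
    by (rule Q.emeasure_PiM[symmetric]) (auto intro!: sets_PiM_I_finite simp: I)
  also have "PiE UNIV (\<lambda>i. PiE I (\<lambda>t. {l t$i<..<u t$i})) = ?\<phi> -` ?X \<inter> space ?Q"
    by (rule vimage_vec_transpose_PiE_box[symmetric])
  also have "emeasure ?Q (?\<phi> -` ?X \<inter> space ?Q) = emeasure (distr ?Q (PiM I (\<lambda>_. lborel)) ?\<phi>) ?X"
    by (rule emeasure_distr[symmetric, OF measurable_vec_transpose sets_PiM_I_finite[OF I]]) simp
  finally show ?thesis
    by (rule sym)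
qed

lemma distr_PiM_vec_transpose:
  fixes I :: "'i set"
  assumes "finite I"
  shows "distr (PiM (UNIV::'d::finite set) (\<lambda>_. PiM I (\<lambda>_. lborel::real measure))) (PiM I (\<lambda>_. lborel))
      (\<lambda>y. \<lambda>t\<in>I. \<chi> i. y i t) = PiM I (\<lambda>_. lborel::(real^'d) measure)"
    (is "?D = ?P")
proof (rule measure_eqI_generator_eq[OF Int_stable_PiE_boxes _ _ _ sets_PiM_lborel_boxes[OF assms]])
  let ?B = "range (\<lambda>(a, b). box a b :: (real^'d) set)"
  let ?C = "\<lambda>n::nat. PiE I (\<lambda>_. box (- (real n *\<^sub>R One)) (real n *\<^sub>R One) :: (real^'d) set)"
  show "{PiE I A | A. \<forall>t\<in>I. A t \<in> ?B} \<subseteq> Pow (PiE I (\<lambda>_. UNIV))"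
    by (auto simp: PiE_iff)
  show "sets ?D = sigma_sets (PiE I (\<lambda>_. UNIV)) {PiE I A | A. \<forall>t\<in>I. A t \<in> ?B}"
    using sets_PiM_lborel_boxes[OF assms] by simp
  have "box a b \<in> ?B" for a b :: "real^'d"
    by (rule range_eqI[where x="(a, b)"]) simp
  then show "range ?C \<subseteq> {PiE I A | A. \<forall>t\<in>I. A t \<in> ?B}"
    by blast
  show "(\<Union>n. ?C n) = PiE I (\<lambda>_. UNIV)"
    using assms by (rule UN_PiE_cubes_eq)
  show "emeasure ?D (?C n) \<noteq> \<infinity>" for n
  proof -
    have "emeasure ?D (?C n) = emeasure ?P (?C n)"
      by (rule emeasure_distr_vec_transpose_PiE_box[OF assms])
    also have "\<dots> \<noteq> \<infinity>"
      by (rule emeasure_PiM_cube_finite[OF assms])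
    finally show ?thesis .
  qed
  fix X assume "X \<in> {PiE I A | A. \<forall>t\<in>I. A t \<in> ?B}"
  then obtain A where X: "X = PiE I A" and "\<forall>t\<in>I. A t \<in> ?B"
    by blast
  then have "\<forall>t\<in>I. \<exists>lu. A t = box (fst lu) (snd lu)"
    by (simp add: image_iff case_prod_beta)
  from bchoice[OF this] obtain lu where lu: "\<forall>t\<in>I. A t = box (fst (lu t)) (snd (lu t))"
    by blast
  have "X = PiE I (\<lambda>t. box (fst (lu t)) (snd (lu t)))"
    unfolding X using lu by (intro PiE_cong) auto
  then show "emeasure ?D X = emeasure ?P X"
    using emeasure_distr_vec_transpose_PiE_box[OF assms] by (simp only:)
qed

section \<open>Second moments of the source and observed processes\<close>

lemma PiM_vec_prod_integral:
  fixes f :: "'d::finite \<Rightarrow> ('i \<Rightarrow> real) \<Rightarrow> real" and I :: "'i set"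
  assumes I: "finite I" and f: "\<And>i. integrable (PiM I (\<lambda>_. lborel)) (f i)"
  shows integrable_PiM_vec_prod:
      "integrable (PiM I (\<lambda>_. lborel::(real^'d) measure)) (\<lambda>s. \<Prod>i\<in>UNIV. f i (\<lambda>t\<in>I. s t $ i))"
    and integral_PiM_vec_prod:
      "(\<integral>s. (\<Prod>i\<in>UNIV. f i (\<lambda>t\<in>I. s t $ i)) \<partial>PiM I (\<lambda>_. lborel::(real^'d) measure)) =
       (\<Prod>i\<in>UNIV. \<integral>x. f i x \<partial>PiM I (\<lambda>_. lborel))"
proof -
  let ?R = "PiM I (\<lambda>_. lborel::real measure)"
  let ?Q = "PiM (UNIV::'d set) (\<lambda>_. ?R)"
  let ?P = "PiM I (\<lambda>_. lborel::(real^'d) measure)"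
  let ?\<phi> = "\<lambda>y::'d \<Rightarrow> 'i \<Rightarrow> real. \<lambda>t\<in>I. \<chi> i. y i t"
  let ?F = "\<lambda>s. \<Prod>i\<in>UNIV. f i (\<lambda>t\<in>I. s t $ i)"
  interpret L: product_sigma_finite "\<lambda>_::'i. lborel::real measure" by standard
  interpret Q: product_sigma_finite "\<lambda>_::'d. ?R"
    using L.sigma_finite[OF I] by (simp add: product_sigma_finite_def)
  have F: "?F \<in> borel_measurable ?P"
    using f by (intro borel_measurable_prod measurable_compose[OF measurable_vec_component]) auto
  have F_\<phi>: "?F (?\<phi> y) = (\<Prod>i\<in>UNIV. f i (y i))" if "y \<in> space ?Q" for y
  proof -
    have "(\<lambda>t\<in>I. ?\<phi> y t $ i) = y i" for i
      using that by (auto simp: space_PiM PiE_iff extensional_def)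
    then show ?thesis by simp
  qed
  note iso = distr_PiM_vec_transpose[OF I, where 'd='d]
  have "integrable ?P ?F \<longleftrightarrow> integrable ?Q (\<lambda>y. ?F (?\<phi> y))"
    using integrable_distr_eq[OF measurable_vec_transpose F] unfolding iso .
  also have "\<dots> \<longleftrightarrow> integrable ?Q (\<lambda>y. \<Prod>i\<in>UNIV. f i (y i))"
    using F_\<phi> by (intro Bochner_Integration.integrable_cong) auto
  finally show "integrable ?P ?F"
    using Q.product_integrable_prod[of UNIV f] f by simp
  have "(\<integral>s. ?F s \<partial>?P) = (\<integral>y. ?F (?\<phi> y) \<partial>?Q)"
    using integral_distr[OF measurable_vec_transpose F] unfolding iso .
  also have "\<dots> = (\<integral>y. (\<Prod>i\<in>UNIV. f i (y i)) \<partial>?Q)"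
    using F_\<phi> by (intro Bochner_Integration.integral_cong) auto
  also have "\<dots> = (\<Prod>i\<in>UNIV. \<integral>x. f i x \<partial>?R)"
    using f by (intro Q.product_integral_prod) auto
  finally show "(\<integral>s. ?F s \<partial>?P) = (\<Prod>i\<in>UNIV. \<integral>x. f i x \<partial>?R)" .
qed

lemma source_law_eq_density:
  assumes "1 \<le> T"
  shows "source_law C T p = density (PiM {1..T} (\<lambda>_. lborel))
      (\<lambda>s. ennreal (\<Prod>i\<in>UNIV. comp_density C T p i (\<lambda>t\<in>{1..T}. s t $ i)))"
  unfolding source_law_def by (simp only: comp_density_restrict[OF assms])

lemma source_law_prod:
  fixes p :: "'d::finite slgp" and h :: "'d \<Rightarrow> (nat \<Rightarrow> real) \<Rightarrow> real"
  assumes v: "valid_slgp C p" and T: "1 \<le> T"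
    and h: "\<And>i. h i \<in> borel_measurable (PiM {1..T} (\<lambda>_. lborel))"
    and h_bound: "\<And>i x. \<bar>h i x\<bar> \<le> quadratic_weight T x"
  shows integrable_source_law_prod:
      "integrable (source_law C T p) (\<lambda>s. \<Prod>i\<in>UNIV. h i (\<lambda>t\<in>{1..T}. s t $ i))"
    and integral_source_law_prod:
      "(\<integral>s. (\<Prod>i\<in>UNIV. h i (\<lambda>t\<in>{1..T}. s t $ i)) \<partial>source_law C T p) =
       (\<Prod>i\<in>UNIV. \<integral>x. comp_density C T p i x * h i x \<partial>PiM {1..T} (\<lambda>_. lborel))"
proof -
  let ?P = "PiM {1..T} (\<lambda>_. lborel::(real^'d) measure)"
  define g where "g s = (\<Prod>i\<in>UNIV. comp_density C T p i (\<lambda>t\<in>{1..T}. s t $ i))" for s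
  define F where "F s = (\<Prod>i\<in>UNIV. h i (\<lambda>t\<in>{1..T}. s t $ i))" for s
  have g_meas: "g \<in> borel_measurable ?P"
    unfolding g_def using T
    by (intro borel_measurable_prod measurable_compose[OF measurable_vec_component]
        borel_measurable_comp_density) auto
  have F_meas: "F \<in> borel_measurable ?P"
    unfolding F_def using h by (intro borel_measurable_prod measurable_compose[OF measurable_vec_component]) auto
  have g_nonneg: "AE s in ?P. 0 \<le> g s"
    unfolding g_def using v T by (intro AE_I2 prod_nonneg comp_density_nonneg) auto
  have gF: "g s *\<^sub>R F s = (\<Prod>i\<in>UNIV. comp_density C T p i (\<lambda>t\<in>{1..T}. s t $ i) * h i (\<lambda>t\<in>{1..T}. s t $ i))" for s
    by (simp add: g_def F_def prod.distrib)
  have ints: "integrable (PiM {1..T} (\<lambda>_. lborel)) (\<lambda>x. comp_density C T p i x * h i x)" for i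
    by (rule integrable_comp_density_mult[OF v T h h_bound])
  have law: "source_law C T p = density ?P (\<lambda>s. ennreal (g s))"
    unfolding g_def by (rule source_law_eq_density[OF T])
  show "integrable (source_law C T p) (\<lambda>s. \<Prod>i\<in>UNIV. h i (\<lambda>t\<in>{1..T}. s t $ i))"
    unfolding law integrable_density[OF F_meas g_meas g_nonneg, unfolded F_def] gF[unfolded F_def]
    using integrable_PiM_vec_prod[OF _ ints] by simp
  show "(\<integral>s. (\<Prod>i\<in>UNIV. h i (\<lambda>t\<in>{1..T}. s t $ i)) \<partial>source_law C T p) =
      (\<Prod>i\<in>UNIV. \<integral>x. comp_density C T p i x * h i x \<partial>PiM {1..T} (\<lambda>_. lborel))"
    unfolding law integral_density[OF F_meas g_meas g_nonneg, unfolded F_def] gF[unfolded F_def]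
    using integral_PiM_vec_prod[OF _ ints] by simp
qed

lemma source_law_component:
  fixes p :: "'d::finite slgp"
  assumes v: "valid_slgp C p" and T: "1 \<le> T"
    and f: "f \<in> borel_measurable (PiM {1..T} (\<lambda>_. lborel))"
    and f_bound: "\<And>x. \<bar>f x\<bar> \<le> quadratic_weight T x"
  shows integrable_source_law_component:
      "integrable (source_law C T p) (\<lambda>s. f (\<lambda>t\<in>{1..T}. s t $ i))"
    and integral_source_law_component:
      "(\<integral>s. f (\<lambda>t\<in>{1..T}. s t $ i) \<partial>source_law C T p) =
       (\<integral>x. comp_density C T p i x * f x \<partial>PiM {1..T} (\<lambda>_. lborel))"
proof -
  define h where "h k x = (if k = i then f x else 1)" for k x
  have h: "h k \<in> borel_measurable (PiM {1..T} (\<lambda>_. lborel))" "\<bar>h k x\<bar> \<le> quadratic_weight T x" for k x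
    using f f_bound quadratic_weight_ge_one[of T x] by (simp_all add: h_def[abs_def])
  have prod_h: "(\<Prod>k\<in>UNIV. h k (z k)) = f (z i)" for z
    by (simp add: h_def)
  show "integrable (source_law C T p) (\<lambda>s. f (\<lambda>t\<in>{1..T}. s t $ i))"
    using integrable_source_law_prod[where h=h, OF v T h] by (simp only: prod_h)
  have "(\<integral>x. comp_density C T p k x * h k x \<partial>PiM {1..T} (\<lambda>_. lborel)) =
      (if k = i then \<integral>x. comp_density C T p i x * f x \<partial>PiM {1..T} (\<lambda>_. lborel) else 1)" for k
    using integral_comp_density[OF v T] by (simp add: h_def)
  then show "(\<integral>s. f (\<lambda>t\<in>{1..T}. s t $ i) \<partial>source_law C T p) =
      (\<integral>x. comp_density C T p i x * f x \<partial>PiM {1..T} (\<lambda>_. lborel))"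
    using integral_source_law_prod[where h=h, OF v T h] by (simp add: prod_h)
qed

lemma source_law_two_components:
  fixes p :: "'d::finite slgp"
  assumes v: "valid_slgp C p" and T: "1 \<le> T" and "i \<noteq> j"
    and f: "f \<in> borel_measurable (PiM {1..T} (\<lambda>_. lborel))" "\<And>x. \<bar>f x\<bar> \<le> quadratic_weight T x"
    and g: "g \<in> borel_measurable (PiM {1..T} (\<lambda>_. lborel))" "\<And>x. \<bar>g x\<bar> \<le> quadratic_weight T x"
  shows integrable_source_law_two_components:
      "integrable (source_law C T p) (\<lambda>s. f (\<lambda>t\<in>{1..T}. s t $ i) * g (\<lambda>t\<in>{1..T}. s t $ j))"
    and integral_source_law_two_components:
      "(\<integral>s. f (\<lambda>t\<in>{1..T}. s t $ i) * g (\<lambda>t\<in>{1..T}. s t $ j) \<partial>source_law C T p) =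
       (\<integral>s. f (\<lambda>t\<in>{1..T}. s t $ i) \<partial>source_law C T p) * (\<integral>s. g (\<lambda>t\<in>{1..T}. s t $ j) \<partial>source_law C T p)"
proof -
  define h where "h k x = (if k = i then f x else 1) * (if k = j then g x else 1)" for k x
  have h: "h k \<in> borel_measurable (PiM {1..T} (\<lambda>_. lborel))" "\<bar>h k x\<bar> \<le> quadratic_weight T x" for k x
    using f g quadratic_weight_ge_one[of T x] \<open>i \<noteq> j\<close> by (simp_all add: h_def[abs_def])
  have prod_h: "(\<Prod>k\<in>UNIV. h k (z k)) = f (z i) * g (z j)" for z
    by (simp add: h_def prod.distrib)
  show "integrable (source_law C T p) (\<lambda>s. f (\<lambda>t\<in>{1..T}. s t $ i) * g (\<lambda>t\<in>{1..T}. s t $ j))"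
    using integrable_source_law_prod[where h=h, OF v T h] by (simp only: prod_h)
  have "(\<integral>x. comp_density C T p k x * h k x \<partial>PiM {1..T} (\<lambda>_. lborel)) =
      (if k = i then \<integral>x. comp_density C T p i x * f x \<partial>PiM {1..T} (\<lambda>_. lborel) else 1) *
      (if k = j then \<integral>x. comp_density C T p j x * g x \<partial>PiM {1..T} (\<lambda>_. lborel) else 1)" for k
    using integral_comp_density[OF v T] \<open>i \<noteq> j\<close> by (simp add: h_def)
  then show "(\<integral>s. f (\<lambda>t\<in>{1..T}. s t $ i) * g (\<lambda>t\<in>{1..T}. s t $ j) \<partial>source_law C T p) =
      (\<integral>s. f (\<lambda>t\<in>{1..T}. s t $ i) \<partial>source_law C T p) * (\<integral>s. g (\<lambda>t\<in>{1..T}. s t $ j) \<partial>source_law C T p)"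
    using integral_source_law_prod[where h=h, OF v T h]
      integral_source_law_component[OF v T f] integral_source_law_component[OF v T g]
    by (simp add: prod_h prod.distrib)
qed

lemma integrable_source_law_entry:
  fixes p :: "'d::finite slgp"
  assumes v: "valid_slgp C p" and T: "1 \<le> T" and t: "t \<in> {1..T}"
  shows "integrable (source_law C T p) (\<lambda>s. s t $ i)"
  using integrable_source_law_component[OF v T _ abs_le_quadratic_weight[OF t], of i] t by simp

lemma integrable_source_law_entry_mult:
  fixes p :: "'d::finite slgp"
  assumes v: "valid_slgp C p" and T: "1 \<le> T" and t: "t \<in> {1..T}" and r: "r \<in> {1..T}"
  shows "integrable (source_law C T p) (\<lambda>s. s t $ i * s r $ j)"
proof (cases "i = j")
  case True
  then show ?thesis
    using integrable_source_law_component[OF v T _ abs_mult_le_quadratic_weight[OF t r], of i] t r by simp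
next
  case False
  then show ?thesis
    using integrable_source_law_two_components[OF v T False _ abs_le_quadratic_weight[OF t] _ abs_le_quadratic_weight[OF r]] t r
    by simp
qed

lemma integral_source_law_entry_mult:
  fixes p :: "'d::finite slgp"
  assumes v: "valid_slgp C p" and T: "1 \<le> T" and t: "t \<in> {1..T}" and r: "r \<in> {1..T}" and "i \<noteq> j"
  shows "(\<integral>s. s t $ i * s r $ j \<partial>source_law C T p) =
    (\<integral>s. s t $ i \<partial>source_law C T p) * (\<integral>s. s r $ j \<partial>source_law C T p)"
  using integral_source_law_two_components[OF v T \<open>i \<noteq> j\<close> _ abs_le_quadratic_weight[OF t] _ abs_le_quadratic_weight[OF r]] t r
  by simp

lemma diagonal_cov_mat_source_law:
  fixes p :: "'d::finite slgp"
  assumes "valid_slgp C p" and "1 \<le> T" and "t \<in> {1..T}" and "r \<in> {1..T}"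
  shows "diagonal_mat (cov_mat (source_law C T p) t r)"
  using integral_source_law_entry_mult[OF assms] by (simp add: diagonal_mat_def cov_mat_def)

lemma borel_measurable_PiM_vec_nth:
  assumes "t \<in> I"
  shows "(\<lambda>w. (w t :: real^'k::finite) $ a) \<in> borel_measurable (PiM I (\<lambda>_. borel))"
proof -
  have "(\<lambda>w. w t) \<in> measurable (PiM I (\<lambda>_. borel)) (borel :: (real^'k) measure)"
    using assms by simp
  then show ?thesis
    by (rule measurable_compose) measurable
qed

lemma cov_mat_distr_linear:
  fixes M :: "(nat \<Rightarrow> real^'d::finite) measure" and G :: "real^'d^'k::finite"
  assumes meas: "(\<lambda>s. \<lambda>t\<in>I. G *v s t) \<in> measurable M (PiM I (\<lambda>_. borel))"
    and t: "t \<in> I" and r: "r \<in> I"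
    and int_t: "\<And>j. integrable M (\<lambda>s. s t $ j)" and int_r: "\<And>j. integrable M (\<lambda>s. s r $ j)"
    and int_tr: "\<And>j k. integrable M (\<lambda>s. s t $ j * s r $ k)"
  shows "cov_mat (distr M (PiM I (\<lambda>_. borel)) (\<lambda>s. \<lambda>t\<in>I. G *v s t)) t r = G ** cov_mat M t r ** transpose G"
proof -
  let ?N = "distr M (PiM I (\<lambda>_. borel)) (\<lambda>s. \<lambda>t\<in>I. G *v s t)"
  note entry = borel_measurable_PiM_vec_nth[where 'k='k]
  have mean: "(\<integral>w. w t' $ a \<partial>?N) = (\<Sum>j\<in>UNIV. G$a$j * (\<integral>s. s t' $ j \<partial>M))"
    if "t' \<in> I" "\<And>j. integrable M (\<lambda>s. s t' $ j)" for t' a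
    using that(2) integral_distr[OF meas entry[OF that(1)]] that(1)
    by (simp add: matrix_vector_mult_def)
  have second: "(\<integral>w. w t $ a * w r $ b \<partial>?N) =
      (\<Sum>j\<in>UNIV. \<Sum>k\<in>UNIV. G$a$j * G$b$k * (\<integral>s. s t $ j * s r $ k \<partial>M))" for a b
  proof -
    have "(\<integral>w. w t $ a * w r $ b \<partial>?N) = (\<integral>s. (G *v s t) $ a * (G *v s r) $ b \<partial>M)"
      using integral_distr[OF meas borel_measurable_times[OF entry[OF t] entry[OF r]]] t r by simp
    also have "\<dots> = (\<integral>s. (\<Sum>j\<in>UNIV. \<Sum>k\<in>UNIV. G$a$j * G$b$k * (s t $ j * s r $ k)) \<partial>M)"
      by (simp add: matrix_vector_mult_def sum_distrib_left sum_distrib_right mult_ac)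
    finally show ?thesis
      by (simp add: int_tr)
  qed
  have "cov_mat ?N t r $ a $ b = (G ** cov_mat M t r ** transpose G) $ a $ b" for a b
  proof -
    have "cov_mat ?N t r $ a $ b = (\<Sum>j\<in>UNIV. \<Sum>k\<in>UNIV. G$a$j * G$b$k *
        ((\<integral>s. s t $ j * s r $ k \<partial>M) - (\<integral>s. s t $ j \<partial>M) * (\<integral>s. s r $ k \<partial>M)))"
      unfolding cov_mat_def using second[of a b] mean[OF t int_t, of a] mean[OF r int_r, of b]
      by (simp add: right_diff_distrib sum_subtractf sum_distrib_left sum_distrib_right mult_ac)
    also have "\<dots> = (G ** cov_mat M t r ** transpose G) $ a $ b"
      by (simp add: matrix_matrix_mult_def transpose_def cov_mat_def sum_distrib_left sum_distrib_right mult_ac)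
         (rule sum.swap)
    finally show ?thesis .
  qed
  then show ?thesis
    by (simp add: vec_eq_iff)
qed

lemma cov_mat_obs_law:
  fixes G :: "real^'d::finite^'k::finite" and p :: "'d slgp"
  assumes v: "valid_slgp C p" and T: "1 \<le> T" and t: "t \<in> {1..T}" and r: "r \<in> {1..T}"
  shows "cov_mat (obs_law C T G p) t r = G ** cov_mat (source_law C T p) t r ** transpose G"
  unfolding obs_law_def
proof (rule cov_mat_distr_linear[OF _ t r])
  have "(\<lambda>s. \<lambda>t\<in>{1..T}. G *v s t) \<in> measurable (PiM {1..T} (\<lambda>_. lborel)) (PiM {1..T} (\<lambda>_. borel))"
  proof (rule measurable_restrict)
    fix t assume "t \<in> {1..T}"
    then have "(\<lambda>s. s t) \<in> measurable (PiM {1..T} (\<lambda>_. lborel)) (borel :: (real^'d) measure)"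
      by simp
    then show "(\<lambda>s. G *v s t) \<in> borel_measurable (PiM {1..T} (\<lambda>_. lborel))"
      by (rule measurable_compose)
         (intro borel_measurable_continuous_onI linear_continuous_on matrix_vector_mul_bounded_linear)
  qed
  then show "(\<lambda>s. \<lambda>t\<in>{1..T}. G *v s t) \<in> measurable (source_law C T p) (PiM {1..T} (\<lambda>_. borel))"
    by (simp add: source_law_def)
qed (rule integrable_source_law_entry[OF v T t] integrable_source_law_entry[OF v T r]
    integrable_source_law_entry_mult[OF v T t r])+

theorem mainTheorem6:
  fixes G Gt :: "real^'d^'k"
    and p pt :: "'d slgp"
    and C T :: nat
  assumes "CARD('d) \<le> CARD('k)"
    and "C \<ge> 1" and "T \<ge> 1"
    and "rank G = CARD('d)" and "rank Gt = CARD('d)"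
    and "valid_slgp C p" and "valid_slgp C pt"
    and "obs_law C T G p = obs_law C T Gt pt"
    and "\<forall>i. cov_mat (source_law C T p) 1 1 $ i $ i > 0"
    and "\<exists>t0\<in>{1..T}. \<exists>l0<t0.
           inj (\<lambda>i. (inv_sqrt (cov_mat (source_law C T p) 1 1)
                     ** cov_mat (source_law C T p) t0 (t0 - l0)
                     ** inv_sqrt (cov_mat (source_law C T p) 1 1)) $ i $ i)"
  shows "\<exists>P D :: real^'d^'d. permutation_matrix P \<and> diagonal_mat D \<and> invertible D \<and>
           Gt = G ** P ** matrix_inv D"
proof -
  \<comment> \<open>\<open>CARD('d) \<le> CARD('k)\<close> follows from the rank hypotheses and \<open>C \<ge> 1\<close> from \<open>valid_slgp\<close>.\<close>
  note T = assms(3) and v = assms(6) and vt = assms(7) and pos = assms(9)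
  note diag = diagonal_cov_mat_source_law[OF _ T]
  let ?S = "cov_mat (source_law C T p)" and ?St = "cov_mat (source_law C T pt)"
  obtain t0 l0 where t0: "t0 \<in> {1..T}" and "l0 < t0"
    and inj: "inj (\<lambda>i. (inv_sqrt (?S 1 1) ** ?S t0 (t0 - l0) ** inv_sqrt (?S 1 1)) $ i $ i)"
    using assms(10) by blast
  have r: "t0 - l0 \<in> {1..T}" and one: "1 \<in> {1..T}"
    using t0 \<open>l0 < t0\<close> T by auto
  have cov_eq: "G ** ?S t r ** transpose G = Gt ** ?St t r ** transpose Gt"
    if "t \<in> {1..T}" "r \<in> {1..T}" for t r
    using cov_mat_obs_law[OF v T that, of G] cov_mat_obs_law[OF vt T that, of Gt] assms(8) by simp
  have "inj (\<lambda>i. ?S t0 (t0 - l0) $ i $ i / ?S 1 1 $ i $ i)"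
    using inj unfolding inv_sqrt_congruence_diagonal_entry[OF diag[OF v one one] pos] .
  moreover have "\<forall>i. ?S 1 1 $ i $ i \<noteq> 0"
    using pos by (metis less_irrefl)
  ultimately show ?thesis
    using mixing_matrix_identifiable[OF assms(4,5) diag[OF v one one] diag[OF v t0 r]
        diag[OF vt one one] diag[OF vt t0 r] _ _ cov_eq[OF one one] cov_eq[OF t0 r]]
    by blast
qed

end
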